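(* Consider the censored delayed-feedback bandit model with threshold $m\ge1$ (see context) in which the sequence of pulled arms $(A_s)_{s\ge1}$ is fixed beforehand (deterministic, independent of all realizations). Let $k\in\{1,\dots,K\}$ and $t>0$ with $\tilde N_k(t)>0$. Then for any $\delta>0$, \[ \mathbb{P}\Big(\{\hat\theta_k(t)<\theta_k\}\cap\{\tilde N_k(t)\,d_{\mathrm{Pois}}(\hat\theta_k(t),\theta_k)>\delta\}\Big)<e^{-\delta}. \]
   Context: Censored delayed-feedback bandit model: $K$ arms with conversion rates $\theta_1,\dots,\theta_K\in[0,1]$; a delay distribution on $\mathbb{N}$ with CDF $\tau_d=\mathbb{P}(D\le d)$; threshold $m$. Pulling arm $A_s$ at round $s$ triggers independent $C_s\sim\mathrm{Bernoulli}(\theta_{A_s})$ and $D_s\sim\tau$ (independent across rounds); a conversion of the pull at round $s$ is observed at time $s+D_s$ only if $D_s\le m$. Define $\tilde N_k(t)=\tau_m\sum_{s=1}^{t-m}\mathbf{1}\{A_s=k\}+\sum_{s=t-m+1}^{t-1}\mathbf{1}\{A_s=k\}\tau_{t-s}$, $S_k(t)=\sum_{s=1}^{t-1}\mathbf{1}\{A_s=k\}C_s\mathbf{1}\{D_s\le\min(t-s,m)\}$ (the number of conversions of previous pulls of $k$ observed by time $t$), and $\hat\theta_k(t)=S_k(t)/\tilde N_k(t)$. $d_{\mathrm{Pois}}(p,q)=p\log(p/q)+q-p$ is the Poisson Kullback–Leibler divergence. *)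

theory Defs
  imports "HOL-Probability.Probability"
begin

text \<open>Rounds are indexed by s = 1, 2, ... An outcome records, for each round s, the pair
  (C_s, D_s) of conversion indicator and delay. For the quantities at time t only the rounds
  s in {1..<t} matter, so the probability space is the joint law of (C_s, D_s) for these
  rounds: a product of independent pairs, C_s ~ Bernoulli(theta (A s)), D_s ~ delay,
  C_s independent of D_s.\<close>

definition cdf_tau :: "nat pmf \<Rightarrow> nat \<Rightarrow> real" where
  "cdf_tau delay d = measure_pmf.prob delay {..d}"

definition bandit_pmf ::
  "(nat \<Rightarrow> nat) \<Rightarrow> (nat \<Rightarrow> real) \<Rightarrow> nat pmf \<Rightarrow> nat \<Rightarrow> (nat \<Rightarrow> bool \<times> nat) pmf" where
  "bandit_pmf A \<theta> delay t =
     Pi_pmf {1..<t} (False, 0) (\<lambda>s. pair_pmf (bernoulli_pmf (\<theta> (A s))) delay)"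

definition Ntilde :: "(nat \<Rightarrow> nat) \<Rightarrow> nat pmf \<Rightarrow> nat \<Rightarrow> nat \<Rightarrow> nat \<Rightarrow> real" where
  "Ntilde A delay m k t =
     cdf_tau delay m * real (card {s\<in>{1..<t}. s + m \<le> t \<and> A s = k})
     + (\<Sum>s\<in>{s\<in>{1..<t}. t < s + m}. (if A s = k then cdf_tau delay (t - s) else 0))"

definition Sk :: "(nat \<Rightarrow> nat) \<Rightarrow> nat \<Rightarrow> nat \<Rightarrow> nat \<Rightarrow> (nat \<Rightarrow> bool \<times> nat) \<Rightarrow> real" where
  "Sk A m k t \<omega> =
     real (card {s\<in>{1..<t}. A s = k \<and> fst (\<omega> s) \<and> snd (\<omega> s) \<le> min (t - s) m})"

definition theta_hat ::
  "(nat \<Rightarrow> nat) \<Rightarrow> nat pmf \<Rightarrow> nat \<Rightarrow> nat \<Rightarrow> nat \<Rightarrow> (nat \<Rightarrow> bool \<times> nat) \<Rightarrow> real" where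
  "theta_hat A delay m k t \<omega> = Sk A m k t \<omega> / Ntilde A delay m k t"

text \<open>Poisson KL divergence (with 0 log 0 = 0, automatic since 0 * _ = 0).\<close>
definition d_pois :: "real \<Rightarrow> real \<Rightarrow> real" where
  "d_pois p q = p * ln (p / q) + q - p"

end

theory Submission imports Defs begin

text \<open>The number of observed conversions of arm k is a sum of independent Bernoulli variables
  whose means add up to \<open>\<theta>\<^sub>k N~\<^sub>k(t)\<close>, so its probability generating function
  is at most that of a Poisson variable with that mean. The Chernoff bound for the lower tail
  then yields \<open>exp (- d_pois n (\<theta>\<^sub>k N~\<^sub>k(t)))\<close> for the event of at most n observed
  conversions; rescaling by \<open>N~\<^sub>k(t)\<close> turns this into the bound for \<open>\<hat>\<theta>\<^sub>k(t)\<close>.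
  The event of the theorem is contained in the lower tail at the largest count it contains.\<close>

lemma d_pois_mult:
  assumes "c > 0"
  shows "c * d_pois p q = d_pois (c * p) (c * q)"
  using assms by (simp add: d_pois_def algebra_simps)

lemma prob_le_mult_pow_le_expectation_pow:
  fixes M :: "'a pmf" and S :: "'a \<Rightarrow> nat" and r :: real
  assumes "0 \<le> r" "r \<le> 1"
  shows "measure_pmf.prob M {\<omega>. S \<omega> \<le> n} * r ^ n \<le> measure_pmf.expectation M (\<lambda>\<omega>. r ^ S \<omega>)"
proof -
  have "measure_pmf.prob M {\<omega>. S \<omega> \<le> n} * r ^ n
      = measure_pmf.expectation M (\<lambda>\<omega>. indicator {\<omega>. S \<omega> \<le> n} \<omega> * r ^ n)"
    by simp
  also have "\<dots> \<le> measure_pmf.expectation M (\<lambda>\<omega>. r ^ S \<omega>)"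
  proof (rule integral_mono)
    show "integrable (measure_pmf M) (\<lambda>\<omega>. indicator {\<omega>. S \<omega> \<le> n} \<omega> * r ^ n)"
      by (rule measure_pmf.integrable_const_bound[where B="r ^ n"])
        (auto simp: indicator_def assms)
    show "integrable (measure_pmf M) (\<lambda>\<omega>. r ^ S \<omega>)"
      by (rule measure_pmf.integrable_const_bound[where B=1]) (auto simp: assms power_le_one)
    show "indicator {\<omega>. S \<omega> \<le> n} \<omega> * r ^ n \<le> r ^ S \<omega>" for \<omega>
      using assms by (auto simp: indicator_def intro: power_decreasing)
  qed
  finally show ?thesis .
qed

lemma prob_le_le_exp_neg_d_pois:
  fixes M :: "'a pmf" and S :: "'a \<Rightarrow> nat" and \<mu> :: real
  assumes pgf: "\<And>r. 0 \<le> r \<Longrightarrow> r \<le> 1 \<Longrightarrow>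
      measure_pmf.expectation M (\<lambda>\<omega>. r ^ S \<omega>) \<le> exp (- ((1 - r) * \<mu>))"
    and n: "real n < \<mu>"
  shows "measure_pmf.prob M {\<omega>. S \<omega> \<le> n} \<le> exp (- d_pois (real n) \<mu>)"
proof -
  define r where "r = real n / \<mu>"
  have \<mu>: "\<mu> > 0"
    using n by linarith
  have r: "0 \<le> r" "r \<le> 1"
    using n \<mu> by (auto simp: r_def)
  have rpow: "r ^ n > 0"
    using \<mu> by (cases "n = 0") (auto simp: r_def)
  have "measure_pmf.prob M {\<omega>. S \<omega> \<le> n} * r ^ n \<le> exp (- ((1 - r) * \<mu>))"
    using prob_le_mult_pow_le_expectation_pow[OF r] pgf[OF r] by (rule order_trans)
  also have "\<dots> = exp (- d_pois (real n) \<mu>) * r ^ n"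
  proof (cases "n = 0")
    case False
    then have "r > 0"
      using \<mu> by (simp add: r_def)
    then have "r ^ n = exp (real n * ln r)"
      by (simp add: exp_of_nat_mult)
    moreover have "(1 - r) * \<mu> = \<mu> - real n"
      using \<mu> by (simp add: r_def field_simps)
    ultimately show ?thesis
      by (simp add: d_pois_def r_def mult_exp_exp)
  qed (simp add: r_def d_pois_def)
  finally show ?thesis
    using rpow by simp
qed

definition observed :: "(nat \<Rightarrow> nat) \<Rightarrow> nat \<Rightarrow> nat \<Rightarrow> nat \<Rightarrow> (nat \<Rightarrow> bool \<times> nat) \<Rightarrow> nat set"
  where "observed A m k t \<omega> = {s\<in>{1..<t}. A s = k \<and> fst (\<omega> s) \<and> snd (\<omega> s) \<le> min (t - s) m}"

lemma card_observed_le: "card (observed A m k t \<omega>) \<le> t"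
  by (rule order_trans[OF card_mono[of "{1..<t}"]]) (auto simp: observed_def)

lemma theta_hat_eq_card_observed:
  "theta_hat A delay m k t \<omega> = real (card (observed A m k t \<omega>)) / Ntilde A delay m k t"
  by (simp add: theta_hat_def Sk_def observed_def)

lemma cdf_tau_nonneg: "0 \<le> cdf_tau delay d"
  and cdf_tau_le_1: "cdf_tau delay d \<le> 1"
  by (auto simp: cdf_tau_def)

lemma Ntilde_eq_sum:
  "Ntilde A delay m k t = (\<Sum>s\<in>{1..<t}. if A s = k then cdf_tau delay (min (t - s) m) else 0)"
proof -
  let ?f = "\<lambda>s. if A s = k then cdf_tau delay (min (t - s) m) else 0"
  let ?early = "{s\<in>{1..<t}. s + m \<le> t}" and ?late = "{s\<in>{1..<t}. t < s + m}"
  have "(\<Sum>s\<in>{1..<t}. ?f s) = (\<Sum>s\<in>?early. ?f s) + (\<Sum>s\<in>?late. ?f s)"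
    by (subst sum.union_disjoint[symmetric]) (auto intro: sum.cong)
  moreover have "(\<Sum>s\<in>?early. ?f s) = (\<Sum>s\<in>?early. if A s = k then cdf_tau delay m else 0)"
    by (rule sum.cong) (auto simp: min_def intro: arg_cong[where f="cdf_tau delay"])
  moreover have "\<dots> = (\<Sum>s\<in>{s\<in>?early. A s = k}. cdf_tau delay m)"
    by (rule sum.inter_filter[symmetric]) auto
  moreover have "{s\<in>?early. A s = k} = {s\<in>{1..<t}. s + m \<le> t \<and> A s = k}"
    by auto
  moreover have "(\<Sum>s\<in>?late. ?f s) = (\<Sum>s\<in>?late. if A s = k then cdf_tau delay (t - s) else 0)"
    by (rule sum.cong) (auto simp: min_def)
  ultimately show ?thesis
    by (simp add: Ntilde_def)
qed

lemma expectation_indicator_scaled: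
  fixes r :: real
  shows "measure_pmf.expectation p (\<lambda>v. if v \<in> B then r else 1)
       = 1 - (1 - r) * measure_pmf.prob p B"
proof -
  have "(\<lambda>v. if v \<in> B then r else 1) = (\<lambda>v. 1 - (1 - r) * indicator B v)"
    by (auto simp: indicator_def)
  moreover have "integrable (measure_pmf p) (indicator B :: _ \<Rightarrow> real)"
    by (rule measure_pmf.integrable_const_bound[where B=1]) (auto simp: indicator_def)
  ultimately show ?thesis
    by simp
qed

lemma expectation_observed_round:
  fixes r p :: real
  assumes "0 \<le> p" "p \<le> 1"
  shows "measure_pmf.expectation (pair_pmf (bernoulli_pmf p) delay)
      (\<lambda>v. if b \<and> fst v \<and> snd v \<le> d then r else 1)
    = (if b then 1 - (1 - r) * (p * cdf_tau delay d) else 1)"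
proof (cases b)
  case True
  have "(\<lambda>v. if b \<and> fst v \<and> snd v \<le> d then r else 1) = (\<lambda>v. if v \<in> {True} \<times> {..d} then r else 1)"
    using True by auto
  moreover have "measure_pmf.prob (pair_pmf (bernoulli_pmf p) delay) ({True} \<times> {..d})
      = p * cdf_tau delay d"
    by (subst measure_pmf_prob_product) (auto simp: cdf_tau_def measure_pmf_single assms)
  ultimately show ?thesis
    using True by (simp add: expectation_indicator_scaled)
qed simp

text \<open>Factorise over the independent rounds and bound each factor by \<open>1 - x \<le> exp (- x)\<close>.\<close>

lemma expectation_pow_card_observed_le:
  fixes r :: real
  assumes r: "0 \<le> r" "r \<le> 1"
    and \<theta>: "\<And>s. s \<in> {1..<t} \<Longrightarrow> 0 \<le> \<theta> (A s) \<and> \<theta> (A s) \<le> 1"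
  shows "measure_pmf.expectation (bandit_pmf A \<theta> delay t) (\<lambda>\<omega>. r ^ card (observed A m k t \<omega>))
    \<le> exp (- ((1 - r) * (\<theta> k * Ntilde A delay m k t)))"
proof -
  let ?I = "{1..<t::nat}" and ?c = "\<lambda>s. cdf_tau delay (min (t - s) m)"
  define f where "f s v = (if A s = k \<and> fst v \<and> snd v \<le> min (t - s) m then r else (1::real))"
    for s v
  have "(\<lambda>\<omega>. r ^ card (observed A m k t \<omega>)) = (\<lambda>\<omega>. \<Prod>s\<in>?I. f s (\<omega> s))"
    by (simp add: observed_def f_def prod.If_cases Int_def conj_commute)
  then have "measure_pmf.expectation (bandit_pmf A \<theta> delay t) (\<lambda>\<omega>. r ^ card (observed A m k t \<omega>))
    = (\<Prod>s\<in>?I. measure_pmf.expectation (pair_pmf (bernoulli_pmf (\<theta> (A s))) delay) (f s))"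
    unfolding bandit_pmf_def
    by (simp only:, intro expectation_prod_Pi_pmf)
       (auto simp: f_def r intro!: measure_pmf.integrable_const_bound[where B=1])
  also have "\<dots> = (\<Prod>s\<in>?I. if A s = k then 1 - (1 - r) * (\<theta> (A s) * ?c s) else 1)"
    unfolding f_def by (intro prod.cong refl expectation_observed_round) (use \<theta> in auto)
  also have "\<dots> \<le> (\<Prod>s\<in>?I. exp (- (if A s = k then (1 - r) * \<theta> k * ?c s else 0)))"
  proof (intro prod_mono conjI)
    fix s assume s: "s \<in> ?I"
    have "(1 - r) * (\<theta> (A s) * ?c s) \<le> 1 * (1 * 1)"
      using \<theta>[OF s] r cdf_tau_nonneg cdf_tau_le_1 by (intro mult_mono) auto
    then show "0 \<le> (if A s = k then 1 - (1 - r) * (\<theta> (A s) * ?c s) else 1)"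
      by auto
    show "(if A s = k then 1 - (1 - r) * (\<theta> (A s) * ?c s) else 1)
       \<le> exp (- (if A s = k then (1 - r) * \<theta> k * ?c s else 0))"
      using exp_ge_add_one_self[of "- ((1 - r) * \<theta> k * ?c s)"] by (auto simp: algebra_simps)
  qed
  also have "\<dots> = exp (- (\<Sum>s\<in>?I. if A s = k then (1 - r) * \<theta> k * ?c s else 0))"
    by (simp only: sum_negf[symmetric] exp_sum[OF finite_atLeastLessThan])
  also have "(\<Sum>s\<in>?I. if A s = k then (1 - r) * \<theta> k * ?c s else 0)
      = (1 - r) * (\<theta> k * Ntilde A delay m k t)"
    unfolding Ntilde_eq_sum sum_distrib_left by (rule sum.cong) auto
  finally show ?thesis .
qed

lemma prob_card_observed_le_le_exp_neg_d_pois: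
  assumes "\<And>s. s \<in> {1..<t} \<Longrightarrow> 0 \<le> \<theta> (A s) \<and> \<theta> (A s) \<le> 1"
    and "real n < \<theta> k * Ntilde A delay m k t"
  shows "measure_pmf.prob (bandit_pmf A \<theta> delay t) {\<omega>. card (observed A m k t \<omega>) \<le> n}
    \<le> exp (- d_pois (real n) (\<theta> k * Ntilde A delay m k t))"
  using assms by (intro prob_le_le_exp_neg_d_pois expectation_pow_card_observed_le)

theorem lemma7:
  fixes K m k t :: nat and A :: "nat \<Rightarrow> nat" and \<theta> :: "nat \<Rightarrow> real"
    and delay :: "nat pmf" and \<delta> :: real
  assumes "m \<ge> 1"
    and "\<And>i. i \<in> {1..K} \<Longrightarrow> 0 \<le> \<theta> i \<and> \<theta> i \<le> 1"
    and "\<And>s. s \<ge> 1 \<Longrightarrow> A s \<in> {1..K}"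
    and "k \<in> {1..K}"
    and "t > 0"
    and "Ntilde A delay m k t > 0"
    and "\<delta> > 0"
  shows "measure_pmf.prob (bandit_pmf A \<theta> delay t)
           {\<omega>. theta_hat A delay m k t \<omega> < \<theta> k \<and>
                Ntilde A delay m k t * d_pois (theta_hat A delay m k t \<omega>) (\<theta> k) > \<delta>}
         < exp (- \<delta>)"
    (is "measure_pmf.prob ?M ?E < _")
proof (cases "?E = {}")
  case False
  let ?N = "Ntilde A delay m k t" and ?S = "\<lambda>\<omega>. card (observed A m k t \<omega>)"
  obtain \<omega>\<^sub>0 where "\<omega>\<^sub>0 \<in> ?E" and max: "\<And>\<omega>. \<omega> \<in> ?E \<Longrightarrow> ?S \<omega> \<le> ?S \<omega>\<^sub>0"
  proof -
    obtain \<omega> where "\<omega> \<in> ?E"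
      using False by blast
    moreover have "\<forall>\<omega>. \<omega> \<in> ?E \<longrightarrow> ?S \<omega> < Suc t"
      using card_observed_le le_imp_less_Suc by blast
    ultimately show ?thesis
      using that Lattices_Big.ex_has_greatest_nat[of "\<lambda>\<omega>. \<omega> \<in> ?E" \<omega> ?S "Suc t"] by blast
  qed
  then have "real (?S \<omega>\<^sub>0) < \<theta> k * ?N" and "d_pois (real (?S \<omega>\<^sub>0)) (\<theta> k * ?N) > \<delta>"
    using assms(6) by (auto simp: theta_hat_eq_card_observed d_pois_mult field_simps)
  have "measure_pmf.prob ?M ?E \<le> measure_pmf.prob ?M {\<omega>. ?S \<omega> \<le> ?S \<omega>\<^sub>0}"
    using max by (intro measure_pmf.finite_measure_mono) auto
  also have "\<dots> \<le> exp (- d_pois (real (?S \<omega>\<^sub>0)) (\<theta> k * ?N))"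
    using assms(2,3) \<open>real (?S \<omega>\<^sub>0) < \<theta> k * ?N\<close>
    by (intro prob_card_observed_le_le_exp_neg_d_pois) auto
  also have "\<dots> < exp (- \<delta>)"
    using \<open>d_pois (real (?S \<omega>\<^sub>0)) (\<theta> k * ?N) > \<delta>\<close> by simp
  finally show ?thesis .
next
  case True
  then show ?thesis
    by (simp only: measure_empty) simp
qed

end
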